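(* Assume $f$ and all $g_i$ are $C^1$, and the bounded measurable functions $w_i$ on $[t_k,t_{k+1}]$ satisfy \[ \int_{t_k}^{t_{k+1}}\big(v_i(t)-w_i(t)\big)\,dt=0\qquad(i=1,\dots,m). \] Then the local error is $O(h_k^2)$: there is a constant $C$ depending only on the standing bounds ($K,K_i,L,L_i,\Lambda,V_i$) and on bounds for $\sup|w_i|$ such that $\|x(t_{k+1})-y(t_{k+1})\|\le C\,h_k^2$.
   Context: Setting: for $m\ge 1$ consider on $\mathbb{R}^n$ the input-affine system $\dot x(t)=f(x(t))+\sum_{i=1}^m g_i(x(t))v_i(t)$, where $f,g_i:\mathbb{R}^n\to\mathbb{R}^n$ and each $v_i$ is a Lebesgue measurable function with $|v_i(t)|\le V_i$ for some $V_i>0$. Fix a time step $[t_k,t_{k+1}]$ with $h_k=t_{k+1}-t_k>0$ and $t_{k+1/2}=(t_k+t_{k+1})/2$, and let $x$ be a solution on $[t_k,t_{k+1}]$. Given real-valued bounded measurable functions $w_i$ on $[t_k,t_{k+1}]$, let $y$ be the solution of the approximate system $\dot y(t)=f(y(t))+\sum_{i=1}^m g_i(y(t))w_i(t)$ with $y(t_k)=x(t_k)$. Norms: $\|x\|=\max_j|x_j|$ on $\mathbb{R}^n$, the induced matrix norm $\|Q\|=\max_k\sum_i|q_{ki}|$, and the logarithmic norm $\lambda(Q)=\max_k\big(q_{kk}+\sum_{i\neq k}|q_{ki}|\big)$. Standing bounds: there is a convex set $B$ containing $x(t)$ and $y(t)$ for all $t\in[t_k,t_{k+1}]$ on which $\|f\|\le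 K$, $\|g_i\|\le K_i$, $\|Df\|\le L$, $\|Dg_i\|\le L_i$, $\|D^2f\|\le H$, $\|D^2g_i\|\le H_i$ (whenever these derivatives exist; $D$ is the Jacobian, $D^2$ the second derivative) and $\lambda(Df)\le\Lambda$, with $\Lambda\neq 0$. Put $K'=\sum_{i=1}^m V_iK_i$, $L'=\sum_{i=1}^m V_iL_i$, $H'=\sum_{i=1}^m V_iH_i$. *)

theory Defs
  imports "HOL-Analysis.Analysis"
begin

definition maxnorm :: "real^'n \<Rightarrow> real" where
  "maxnorm x = Max (range (\<lambda>j. \<bar>x $ j\<bar>))"

definition matnorm :: "real^'n^'n \<Rightarrow> real" where
  "matnorm Q = Max (range (\<lambda>k. \<Sum>i\<in>UNIV. \<bar>Q $ k $ i\<bar>))"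

definition lognorm :: "real^'n^'n \<Rightarrow> real" where
  "lognorm Q = Max (range (\<lambda>k. Q $ k $ k + (\<Sum>i\<in>UNIV - {k}. \<bar>Q $ k $ i\<bar>)))"

definition C1_with_jacobian :: "(real^'n \<Rightarrow> real^'n) \<Rightarrow> (real^'n \<Rightarrow> real^'n^'n) \<Rightarrow> bool" where
  "C1_with_jacobian F DF \<longleftrightarrow>
     (\<forall>z. (F has_derivative (\<lambda>u. DF z *v u)) (at z)) \<and> continuous_on UNIV DF"

text \<open>x is a (Caratheodory) solution on [a,b] of  x' = F(x) + sum_{i<m} u_i(t) G_i(x),
  written in integral form.\<close>

definition solves_on ::
  "(real^'n \<Rightarrow> real^'n) \<Rightarrow> (nat \<Rightarrow> real^'n \<Rightarrow> real^'n) \<Rightarrow> nat \<Rightarrow> (nat \<Rightarrow> real \<Rightarrow> real)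
    \<Rightarrow> (real \<Rightarrow> real^'n) \<Rightarrow> real \<Rightarrow> real \<Rightarrow> bool" where
  "solves_on F G m u x a b \<longleftrightarrow>
     (\<forall>t\<in>{a..b}. ((\<lambda>s. F (x s) + (\<Sum>i<m. u i s *\<^sub>R G i (x s))) has_integral (x t - x a)) {a..t})"

end

theory Submission
  imports Defs
begin

(* Let h = t_{k+1} - t_k and write F_u(s,z) = f z + \<Sum>_i u_i(s) g_i z for the controlled field.
   Since x and y solve the system in integral form,
     x(t_{k+1}) - y(t_{k+1}) = \<integral> F_v(s,x s) - F_w(s,y s) - \<Sum>_i (v_i - w_i)(s) g_i(x t_k) ds,
   where the subtracted sum integrates to zero by the zero-mean hypothesis.  Rewriting the
   integrand as  f(x) - f(y) + \<Sum>_i w_i (g_i(x) - g_i(y)) + (v_i - w_i)(g_i(x s) - g_i(x t_k)),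
   every term is O(h): by the mean value theorem f and g_i are Lipschitz on the convex set B,
   and x(s) - x(t_k), y(s) - y(t_k) are O(h) because the fields are bounded.  Integrating
   over an interval of length h gives O(h^2). *)

section \<open>The max norm and the induced matrix norm\<close>

lemma maxnorm_comp: "\<bar>x $ j\<bar> \<le> maxnorm x"
  unfolding maxnorm_def by (rule Max_ge) auto

lemma maxnorm_le: "(\<And>j. \<bar>x $ j\<bar> \<le> c) \<Longrightarrow> maxnorm x \<le> c"
  unfolding maxnorm_def by (subst Max_le_iff) auto

lemma maxnorm_nonneg: "0 \<le> maxnorm x"
  using maxnorm_comp[of x] by (meson abs_ge_zero order_trans)

lemma maxnorm_add: "maxnorm (a + b) \<le> maxnorm a + maxnorm b"
  by (rule maxnorm_le) (smt (verit) maxnorm_comp vector_add_component)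

lemma maxnorm_diff: "maxnorm (a - b) \<le> maxnorm a + maxnorm b"
  by (rule maxnorm_le) (smt (verit) maxnorm_comp vector_minus_component)

lemma maxnorm_scale: "maxnorm (r *\<^sub>R a) \<le> \<bar>r\<bar> * maxnorm a"
  by (rule maxnorm_le) (auto simp: abs_mult intro: mult_left_mono maxnorm_comp)

lemma maxnorm_sum: "maxnorm (\<Sum>i\<in>A. f i) \<le> (\<Sum>i\<in>A. maxnorm (f i))"
proof (induction A rule: infinite_finite_induct)
  case (infinite A) then show ?case by simp (rule maxnorm_le, simp)
next
  case empty then show ?case by simp (rule maxnorm_le, simp)
next
  case (insert x F) then show ?case using maxnorm_add[of "f x" "sum f F"] by simp
qed

lemma maxnorm_scale_le:
  assumes "\<bar>r\<bar> \<le> R" "maxnorm a \<le> A"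
  shows "maxnorm (r *\<^sub>R a) \<le> R * A"
proof -
  have "maxnorm (r *\<^sub>R a) \<le> \<bar>r\<bar> * maxnorm a" by (rule maxnorm_scale)
  also have "\<dots> \<le> R * A"
    using assms by (intro mult_mono) (auto simp: maxnorm_nonneg intro: order_trans[OF abs_ge_zero])
  finally show ?thesis .
qed

lemma matnorm_row: "(\<Sum>i\<in>UNIV. \<bar>Q $ k $ i\<bar>) \<le> matnorm Q"
  unfolding matnorm_def by (rule Max_ge) auto

lemma matnorm_nonneg: "0 \<le> matnorm Q"
  using matnorm_row[of Q] by (meson order_trans sum_nonneg abs_ge_zero)

lemma matnorm_mv: "maxnorm (Q *v d) \<le> matnorm Q * maxnorm d"
proof (rule maxnorm_le)
  fix j
  have "\<bar>(Q *v d) $ j\<bar> = \<bar>\<Sum>i\<in>UNIV. Q $ j $ i * d $ i\<bar>" by (simp add: matrix_vector_mult_def)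
  also have "\<dots> \<le> (\<Sum>i\<in>UNIV. \<bar>Q $ j $ i\<bar> * maxnorm d)"
    by (rule order_trans[OF sum_abs]) (auto simp: abs_mult intro!: sum_mono mult_left_mono maxnorm_comp)
  also have "\<dots> \<le> matnorm Q * maxnorm d"
    by (simp add: sum_distrib_right[symmetric] matnorm_row maxnorm_nonneg mult_right_mono)
  finally show "\<bar>(Q *v d) $ j\<bar> \<le> matnorm Q * maxnorm d" .
qed

lemma maxnorm_integral_bound:
  fixes f :: "real \<Rightarrow> real^'n"
  assumes "(f has_integral I) {a..b}" "a \<le> b" "\<And>s. s \<in> {a..b} \<Longrightarrow> maxnorm (f s) \<le> c"
  shows "maxnorm I \<le> c * (b - a)"
proof (rule maxnorm_le)
  fix j
  have "((\<lambda>s. f s $ j) has_integral I $ j) (cbox a b)"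
    using has_integral_linear[OF assms(1) bounded_linear_vec_nth[of j]] by (simp add: o_def)
  moreover have c0: "0 \<le> c" using assms(3)[of a] assms(2) maxnorm_nonneg[of "f a"] by auto
  moreover have "\<And>s. s \<in> cbox a b \<Longrightarrow> norm (f s $ j) \<le> c"
    using order_trans[OF maxnorm_comp assms(3)] by auto
  ultimately have "norm (I $ j) \<le> c * measure lborel (cbox a b)"
    using has_integral_bound[OF c0, of "\<lambda>s. f s $ j" "I $ j" a b] by auto
  then show "\<bar>I $ j\<bar> \<le> c * (b - a)" using assms(2) by simp
qed

section \<open>Lipschitz bound from a bounded Jacobian\<close>

text \<open>Mean value theorem along the segment from z2 to z1, which stays in the convex set B.\<close>

lemma lipschitz_on_convex:
  fixes F :: "real^'n \<Rightarrow> real^'n"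
  assumes C1: "C1_with_jacobian F DF" and B: "convex B"
    and bd: "\<And>z. z \<in> B \<Longrightarrow> matnorm (DF z) \<le> Lb"
    and z1: "z1 \<in> B" and z2: "z2 \<in> B"
  shows "maxnorm (F z1 - F z2) \<le> Lb * maxnorm (z1 - z2)"
proof (rule maxnorm_le)
  fix j
  define d where "d = z1 - z2"
  define \<phi> where "\<phi> = (\<lambda>t. F (z2 + t *\<^sub>R d) $ j)"
  have der: "DERIV \<phi> t :> (DF (z2 + t *\<^sub>R d) *v d) $ j" for t
  proof -
    have D: "(F has_derivative (\<lambda>u. DF (z2 + t *\<^sub>R d) *v u)) (at (z2 + t *\<^sub>R d))"
      using C1 unfolding C1_with_jacobian_def by blast
    have l: "((\<lambda>t. z2 + t *\<^sub>R d) has_derivative (\<lambda>s. s *\<^sub>R d)) (at t)"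
      by (auto intro!: derivative_eq_intros)
    have "((\<lambda>t. F (z2 + t *\<^sub>R d)) has_derivative (\<lambda>s. DF (z2 + t *\<^sub>R d) *v (s *\<^sub>R d))) (at t)"
      using has_derivative_compose[OF l D] by (simp add: o_def)
    from bounded_linear.has_derivative[OF bounded_linear_vec_nth[of j] this]
    have "(\<phi> has_derivative (\<lambda>s. (DF (z2 + t *\<^sub>R d) *v (s *\<^sub>R d)) $ j)) (at t)"
      by (simp add: \<phi>_def)
    then show ?thesis unfolding has_field_derivative_def
      by (rule has_derivative_eq_rhs) (auto simp: matrix_vector_mult_scaleR fun_eq_iff mult.commute)
  qed
  obtain z where z: "0 < z" "z < 1" "\<phi> 1 - \<phi> 0 = (1 - 0) * (DF (z2 + z *\<^sub>R d) *v d) $ j"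
    using MVT2[of 0 1 \<phi> "\<lambda>t. (DF (z2 + t *\<^sub>R d) *v d) $ j"] der by auto
  have zB: "z2 + z *\<^sub>R d \<in> B"
  proof -
    have "z2 + z *\<^sub>R d = (1 - z) *\<^sub>R z2 + z *\<^sub>R z1" by (simp add: d_def algebra_simps)
    then show ?thesis using convexD[OF B z2 z1, of "1-z" z] z by auto
  qed
  have "\<bar>(F z1 - F z2) $ j\<bar> = \<bar>(DF (z2 + z *\<^sub>R d) *v d) $ j\<bar>"
    using z(3) by (simp add: \<phi>_def d_def)
  also have "\<dots> \<le> matnorm (DF (z2 + z *\<^sub>R d)) * maxnorm d"
    using matnorm_mv maxnorm_comp order_trans by blast
  also have "\<dots> \<le> Lb * maxnorm d"
    by (rule mult_right_mono[OF bd[OF zB] maxnorm_nonneg])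
  finally show "\<bar>(F z1 - F z2) $ j\<bar> \<le> Lb * maxnorm (z1 - z2)" by (simp add: d_def)
qed

section \<open>Solutions of the controlled system\<close>

definition ctrl_field ::
  "(real^'n \<Rightarrow> real^'n) \<Rightarrow> (nat \<Rightarrow> real^'n \<Rightarrow> real^'n) \<Rightarrow> nat \<Rightarrow> (nat \<Rightarrow> real \<Rightarrow> real)
    \<Rightarrow> real \<Rightarrow> real^'n \<Rightarrow> real^'n" where
  "ctrl_field F G m u s z = F z + (\<Sum>i<m. u i s *\<^sub>R G i z)"

lemma solves_on_ctrl_field:
  "solves_on F G m u x a b \<longleftrightarrow>
     (\<forall>t\<in>{a..b}. ((\<lambda>s. ctrl_field F G m u s (x s)) has_integral (x t - x a)) {a..t})"
  unfolding solves_on_def ctrl_field_def ..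

lemma ctrl_field_bound:
  assumes "maxnorm (F z) \<le> K"
    and "\<And>i. i < m \<Longrightarrow> maxnorm (G i z) \<le> Ki i" and "\<And>i. i < m \<Longrightarrow> \<bar>u i s\<bar> \<le> U i"
  shows "maxnorm (ctrl_field F G m u s z) \<le> K + (\<Sum>i<m. U i * Ki i)"
proof -
  have "maxnorm (ctrl_field F G m u s z) \<le> maxnorm (F z) + (\<Sum>i<m. maxnorm (u i s *\<^sub>R G i z))"
    unfolding ctrl_field_def using maxnorm_add maxnorm_sum add_left_mono order_trans by blast
  also have "\<dots> \<le> K + (\<Sum>i<m. U i * Ki i)"
    using assms by (intro add_mono sum_mono maxnorm_scale_le) auto
  finally show ?thesis .
qed

lemma solution_drift:
  assumes sol: "solves_on F G m u x a b" and s: "s \<in> {a..b}"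
    and inB: "\<And>t. t \<in> {a..b} \<Longrightarrow> x t \<in> B"
    and bF: "\<And>z. z \<in> B \<Longrightarrow> maxnorm (F z) \<le> K"
    and bG: "\<And>i z. i < m \<Longrightarrow> z \<in> B \<Longrightarrow> maxnorm (G i z) \<le> Ki i"
    and bu: "\<And>i t. i < m \<Longrightarrow> t \<in> {a..b} \<Longrightarrow> \<bar>u i t\<bar> \<le> U i"
  shows "maxnorm (x s - x a) \<le> (K + (\<Sum>i<m. U i * Ki i)) * (b - a)"
proof -
  define M where "M = K + (\<Sum>i<m. U i * Ki i)"
  have field: "maxnorm (ctrl_field F G m u t (x t)) \<le> M" if "t \<in> {a..b}" for t
    unfolding M_def using that by (intro ctrl_field_bound bF bG bu inB) auto
  have M0: "0 \<le> M" using field[OF s] maxnorm_nonneg[of "ctrl_field F G m u s (x s)"] by linarith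
  have "((\<lambda>t. ctrl_field F G m u t (x t)) has_integral (x s - x a)) {a..s}"
    using sol s unfolding solves_on_ctrl_field by auto
  then have "maxnorm (x s - x a) \<le> M * (s - a)"
    by (rule maxnorm_integral_bound) (use s field in auto)
  also have "\<dots> \<le> M * (b - a)" using s M0 by (simp add: mult_left_mono)
  finally show ?thesis unfolding M_def .
qed

lemma solution_difference_has_integral:
  assumes "solves_on F G m u x a b" "solves_on F G m u' y a b" "y a = x a" "a \<le> b"
  shows "((\<lambda>s. ctrl_field F G m u s (x s) - ctrl_field F G m u' s (y s))
           has_integral (x b - y b)) {a..b}"
proof -
  have "((\<lambda>s. ctrl_field F G m u s (x s)) has_integral (x b - x a)) {a..b}"
       "((\<lambda>s. ctrl_field F G m u' s (y s)) has_integral (y b - y a)) {a..b}"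
    using assms unfolding solves_on_ctrl_field by auto
  from has_integral_diff[OF this] show ?thesis using assms(3) by simp
qed

section \<open>Zero-mean controls\<close>

text \<open>A bounded measurable function with vanishing integral has integral 0 in the
  Henstock-Kurzweil sense; measurability and boundedness supply integrability.\<close>

lemma zero_mean_has_integral:
  fixes q :: "real \<Rightarrow> real"
  assumes "q \<in> borel_measurable (lebesgue_on {a..b})" "\<And>t. t \<in> {a..b} \<Longrightarrow> \<bar>q t\<bar> \<le> M"
    and "integral {a..b} q = 0"
  shows "(q has_integral 0) {a..b}"
proof -
  have "q integrable_on {a..b}"
    by (rule measurable_bounded_by_integrable_imp_integrable[where g="\<lambda>_. M"])
       (use assms in auto)
  then show ?thesis using assms(3) by (metis integrable_integral)
qed

lemma control_difference_has_integral:
  fixes v w :: "nat \<Rightarrow> real \<Rightarrow> real" and c :: "nat \<Rightarrow> real^'n"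
  assumes "\<And>i. i < m \<Longrightarrow> v i \<in> borel_measurable (lebesgue_on {a..b})"
    and "\<And>i. i < m \<Longrightarrow> w i \<in> borel_measurable (lebesgue_on {a..b})"
    and "\<And>i t. i < m \<Longrightarrow> t \<in> {a..b} \<Longrightarrow> \<bar>v i t\<bar> \<le> V i"
    and "\<And>i t. i < m \<Longrightarrow> t \<in> {a..b} \<Longrightarrow> \<bar>w i t\<bar> \<le> W i"
    and "\<And>i. i < m \<Longrightarrow> integral {a..b} (\<lambda>t. v i t - w i t) = 0"
  shows "((\<lambda>s. \<Sum>i<m. (v i s - w i s) *\<^sub>R c i) has_integral 0) {a..b}"
proof -
  have "((\<lambda>t. v i t - w i t) has_integral 0) {a..b}" if i: "i < m" for i
  proof (rule zero_mean_has_integral[where M="V i + W i"])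
    show "(\<lambda>t. v i t - w i t) \<in> borel_measurable (lebesgue_on {a..b})"
      using assms(1,2) i by (intro borel_measurable_diff)
    show "\<bar>v i t - w i t\<bar> \<le> V i + W i" if "t \<in> {a..b}" for t
      using assms(3,4)[OF i that] abs_triangle_ineq4[of "v i t" "w i t"] by linarith
  qed (use assms(5) i in auto)
  then have "((\<lambda>s. \<Sum>i<m. (v i s - w i s) *\<^sub>R c i) has_integral (\<Sum>i<m. 0 *\<^sub>R c i)) {a..b}"
    by (intro has_integral_sum has_integral_scaleR_left) auto
  then show ?thesis by simp
qed

lemma error_integrand_bound:
  assumes lip_f: "maxnorm (f z - f z') \<le> L * maxnorm (z - z')"
    and lip_g1: "\<And>i. i < m \<Longrightarrow> maxnorm (g i z - g i z') \<le> Li i * maxnorm (z - z')"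
    and lip_g2: "\<And>i. i < m \<Longrightarrow> maxnorm (g i z - g i z0) \<le> Li i * maxnorm (z - z0)"
    and L0: "0 \<le> L" and Li0: "\<And>i. i < m \<Longrightarrow> 0 \<le> Li i"
    and \<delta>: "maxnorm (z - z') \<le> \<delta>" and \<epsilon>: "maxnorm (z - z0) \<le> \<epsilon>"
    and bv: "\<And>i. i < m \<Longrightarrow> \<bar>v i s\<bar> \<le> V i" and bw: "\<And>i. i < m \<Longrightarrow> \<bar>w i s\<bar> \<le> W i"
  shows "maxnorm (ctrl_field f g m v s z - ctrl_field f g m w s z'
                   - (\<Sum>i<m. (v i s - w i s) *\<^sub>R g i z0))
         \<le> L * \<delta> + (\<Sum>i<m. W i * (Li i * \<delta>) + (V i + W i) * (Li i * \<epsilon>))"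
proof -
  have decomp: "ctrl_field f g m v s z - ctrl_field f g m w s z' - (\<Sum>i<m. (v i s - w i s) *\<^sub>R g i z0)
      = (f z - f z') + (\<Sum>i<m. w i s *\<^sub>R (g i z - g i z') + (v i s - w i s) *\<^sub>R (g i z - g i z0))"
    by (simp add: ctrl_field_def sum_subtractf[symmetric] sum.distrib[symmetric] algebra_simps)
  have "maxnorm (f z - f z') \<le> L * \<delta>"
    using lip_f mult_left_mono[OF \<delta> L0] by linarith
  moreover have "maxnorm (w i s *\<^sub>R (g i z - g i z') + (v i s - w i s) *\<^sub>R (g i z - g i z0))
      \<le> W i * (Li i * \<delta>) + (V i + W i) * (Li i * \<epsilon>)" if i: "i < m" for i
  proof (rule order_trans[OF maxnorm_add add_mono])
    show "maxnorm (w i s *\<^sub>R (g i z - g i z')) \<le> W i * (Li i * \<delta>)"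
      using bw[OF i] lip_g1[OF i] mult_left_mono[OF \<delta> Li0[OF i]]
      by (intro maxnorm_scale_le) auto
    show "maxnorm ((v i s - w i s) *\<^sub>R (g i z - g i z0)) \<le> (V i + W i) * (Li i * \<epsilon>)"
      using bv[OF i] bw[OF i] lip_g2[OF i] mult_left_mono[OF \<epsilon> Li0[OF i]]
      by (intro maxnorm_scale_le) auto
  qed
  then have "maxnorm (\<Sum>i<m. w i s *\<^sub>R (g i z - g i z') + (v i s - w i s) *\<^sub>R (g i z - g i z0))
      \<le> (\<Sum>i<m. W i * (Li i * \<delta>) + (V i + W i) * (Li i * \<epsilon>))"
    by (intro order_trans[OF maxnorm_sum sum_mono]) auto
  ultimately show ?thesis
    unfolding decomp by (intro order_trans[OF maxnorm_add add_mono])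
qed

text \<open>The error constant; note that it does not involve the bound \<Lambda> on the logarithmic norm.\<close>

definition local_error_const ::
  "nat \<Rightarrow> real \<Rightarrow> (nat \<Rightarrow> real) \<Rightarrow> real \<Rightarrow> (nat \<Rightarrow> real) \<Rightarrow> (nat \<Rightarrow> real) \<Rightarrow> (nat \<Rightarrow> real) \<Rightarrow> real" where
  "local_error_const m K Ki L Li V W =
     (let Mx = K + (\<Sum>i<m. V i * Ki i); My = K + (\<Sum>i<m. W i * Ki i)
      in L * (Mx + My) + (\<Sum>i<m. W i * Li i * (Mx + My) + (V i + W i) * Li i * Mx))"

theorem local_error_bound:
  fixes f :: "real^'n \<Rightarrow> real^'n" and g :: "nat \<Rightarrow> real^'n \<Rightarrow> real^'n"
    and x y :: "real \<Rightarrow> real^'n"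
  assumes hlt: "tk < tk1" and Cf: "C1_with_jacobian f Df" and Cg: "\<forall>i<m. C1_with_jacobian (g i) (Dg i)"
    and hv: "\<forall>i<m. V i > 0 \<and> (\<forall>t. \<bar>v i t\<bar> \<le> V i) \<and> v i \<in> borel_measurable (lebesgue_on {tk..tk1})"
    and hw: "\<forall>i<m. (\<forall>t\<in>{tk..tk1}. \<bar>w i t\<bar> \<le> W i) \<and> w i \<in> borel_measurable (lebesgue_on {tk..tk1})"
    and hint: "\<forall>i<m. integral {tk..tk1} (\<lambda>t. v i t - w i t) = 0"
    and sx: "solves_on f g m v x tk tk1" and sy: "solves_on f g m w y tk tk1"
    and y0: "y tk = x tk" and cB: "convex B" and inB: "\<forall>t\<in>{tk..tk1}. x t \<in> B \<and> y t \<in> B"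
    and bf: "\<forall>z\<in>B. maxnorm (f z) \<le> K \<and> matnorm (Df z) \<le> L \<and> lognorm (Df z) \<le> \<Lambda>"
    and bg: "\<forall>i<m. \<forall>z\<in>B. maxnorm (g i z) \<le> Ki i \<and> matnorm (Dg i z) \<le> Li i"
  shows "maxnorm (x tk1 - y tk1) \<le> local_error_const m K Ki L Li V W * (tk1 - tk)\<^sup>2"
proof -
  define h where "h = tk1 - tk"
  define Mx where "Mx = K + (\<Sum>i<m. V i * Ki i)"
  define My where "My = K + (\<Sum>i<m. W i * Ki i)"
  define c where "c = L * (Mx + My) + (\<Sum>i<m. W i * Li i * (Mx + My) + (V i + W i) * Li i * Mx)"
  define G where "G = (\<lambda>s. \<Sum>i<m. (v i s - w i s) *\<^sub>R g i (x tk))"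
  have x0B: "x tk \<in> B" using inB hlt by auto
  have L0: "0 \<le> L" using bf x0B matnorm_nonneg order_trans by blast
  have Li0: "0 \<le> Li i" if "i < m" for i using bg that x0B matnorm_nonneg order_trans by blast
  have lip_f: "maxnorm (f z - f z') \<le> L * maxnorm (z - z')" if "z \<in> B" "z' \<in> B" for z z'
    using lipschitz_on_convex[OF Cf cB _ that] bf by auto
  have lip_g: "maxnorm (g i z - g i z') \<le> Li i * maxnorm (z - z')"
    if "i < m" "z \<in> B" "z' \<in> B" for i z z'
    using lipschitz_on_convex[of "g i" "Dg i" B] Cg bg cB that by auto
  have xdrift: "maxnorm (x s - x tk) \<le> Mx * h" if "s \<in> {tk..tk1}" for s
    unfolding Mx_def h_def using inB bf bg hv
    by (intro solution_drift[OF sx that, of B K Ki V]) auto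
  have ydrift: "maxnorm (y s - y tk) \<le> My * h" if "s \<in> {tk..tk1}" for s
    unfolding My_def h_def using inB bf bg hw
    by (intro solution_drift[OF sy that, of B K Ki W]) auto
  have xy: "maxnorm (x s - y s) \<le> (Mx + My) * h" if s: "s \<in> {tk..tk1}" for s
    using maxnorm_diff[of "x s - x tk" "y s - y tk"] xdrift[OF s] ydrift[OF s] y0 s
    by (simp add: algebra_simps)
  have G_int: "(G has_integral 0) {tk..tk1}"
    unfolding G_def using hv hw hint
    by (intro control_difference_has_integral[where V=V and W=W]) auto
  have err_int: "((\<lambda>s. ctrl_field f g m v s (x s) - ctrl_field f g m w s (y s) - G s)
                   has_integral (x tk1 - y tk1)) {tk..tk1}"
    using has_integral_diff[OF solution_difference_has_integral[OF sx sy y0] G_int] hlt by simp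
  have integrand: "maxnorm (ctrl_field f g m v s (x s) - ctrl_field f g m w s (y s) - G s) \<le> c * h"
    if s: "s \<in> {tk..tk1}" for s
  proof -
    have "maxnorm (ctrl_field f g m v s (x s) - ctrl_field f g m w s (y s) - G s)
          \<le> L * ((Mx + My) * h) + (\<Sum>i<m. W i * (Li i * ((Mx + My) * h)) + (V i + W i) * (Li i * (Mx * h)))"
      unfolding G_def using inB s hv hw L0 Li0 xy[OF s] xdrift[OF s] x0B
      by (intro error_integrand_bound lip_f lip_g) auto
    also have "\<dots> = c * h" by (simp add: c_def algebra_simps sum_distrib_right sum_distrib_left)
    finally show ?thesis .
  qed
  have "maxnorm (x tk1 - y tk1) \<le> (c * h) * (tk1 - tk)"
    by (rule maxnorm_integral_bound[OF err_int]) (use hlt integrand in auto)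
  then show ?thesis
    by (simp add: c_def local_error_const_def Let_def Mx_def My_def h_def power2_eq_square)
qed

theorem mainTheorem2:
  fixes m :: nat
  assumes "m \<ge> 1"
  shows "\<exists>C :: real \<Rightarrow> (nat \<Rightarrow> real) \<Rightarrow> real \<Rightarrow> (nat \<Rightarrow> real) \<Rightarrow> real
                \<Rightarrow> (nat \<Rightarrow> real) \<Rightarrow> (nat \<Rightarrow> real) \<Rightarrow> real.
    \<forall>(f :: real^'n \<Rightarrow> real^'n) (Df :: real^'n \<Rightarrow> real^'n^'n)
      (g :: nat \<Rightarrow> real^'n \<Rightarrow> real^'n) (Dg :: nat \<Rightarrow> real^'n \<Rightarrow> real^'n^'n)
      (v :: nat \<Rightarrow> real \<Rightarrow> real) (w :: nat \<Rightarrow> real \<Rightarrow> real)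
      (V :: nat \<Rightarrow> real) (W :: nat \<Rightarrow> real)
      (K :: real) (Ki :: nat \<Rightarrow> real) (L :: real) (Li :: nat \<Rightarrow> real) (\<Lambda> :: real)
      (B :: (real^'n) set) (x :: real \<Rightarrow> real^'n) (y :: real \<Rightarrow> real^'n) (tk :: real) (tk1 :: real).
      tk < tk1
      \<and> C1_with_jacobian f Df
      \<and> (\<forall>i<m. C1_with_jacobian (g i) (Dg i))
      \<and> (\<forall>i<m. V i > 0 \<and> (\<forall>t. \<bar>v i t\<bar> \<le> V i)
               \<and> v i \<in> borel_measurable (lebesgue_on {tk..tk1}))
      \<and> (\<forall>i<m. (\<forall>t\<in>{tk..tk1}. \<bar>w i t\<bar> \<le> W i)
               \<and> w i \<in> borel_measurable (lebesgue_on {tk..tk1}))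
      \<and> (\<forall>i<m. integral {tk..tk1} (\<lambda>t. v i t - w i t) = 0)
      \<and> solves_on f g m v x tk tk1
      \<and> solves_on f g m w y tk tk1
      \<and> y tk = x tk
      \<and> convex B
      \<and> (\<forall>t\<in>{tk..tk1}. x t \<in> B \<and> y t \<in> B)
      \<and> (\<forall>z\<in>B. maxnorm (f z) \<le> K \<and> matnorm (Df z) \<le> L \<and> lognorm (Df z) \<le> \<Lambda>)
      \<and> (\<forall>i<m. \<forall>z\<in>B. maxnorm (g i z) \<le> Ki i \<and> matnorm (Dg i z) \<le> Li i)
      \<and> \<Lambda> \<noteq> 0
      \<longrightarrow> maxnorm (x tk1 - y tk1) \<le> C K Ki L Li \<Lambda> V W * (tk1 - tk)\<^sup>2"
  \<comment> \<open>The constant is the one of the local error bound, independent of \<Lambda>.\<close>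
  by (intro exI[of _ "\<lambda>K Ki L Li \<Lambda> V W. local_error_const m K Ki L Li V W"] allI impI, elim conjE)
     (rule local_error_bound; assumption)

end
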